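(* Let $n\ge2$ and let $\Phi:[n]\times[n-1]\times\cdots\times[2]\to\mathfrak S_n$, $\Phi(j_n,\dots,j_2)=\tau(j_2,2)\tau(j_3,3)\cdots\tau(j_n,n)$. If two sequences $s,s'$ differ in exactly one coordinate, then $\Phi(s')=\Phi(s)\,\sigma$ for some $\sigma\in\mathfrak S_n$ that is either a transposition or a $3$-cycle. If moreover both $s,s'$ satisfy $j_k\le k-1$ for all $k$ (so $\Phi(s),\Phi(s')\in\mathcal C_n$), then $\sigma$ is a $3$-cycle. Consequently, any listing of $[n-1]\times[n-2]\times\cdots\times[1]$ in which consecutive words differ in exactly one coordinate is mapped by $\Phi$ to a listing of all of $\mathcal C_n$ (each once) in which each element is obtained from the previous one by right multiplication by a $3$-cycle.
   Context: $[n]=\{1,\dots,n\}$, $\mathfrak S_n$ the symmetric group on $[n]$, right action, products composed left to right ($i(\sigma\rho)=(i\sigma)\rho$); $\tau(i,j)$ the transposition exchanging $i,j$, with $\tau(k,k)$ the identity. $\mathcal C_n$ is the set of $n$-cycles in $\mathfrak S_n$. $\Phi$ is a bijection onto $\mathfrak S_n$ and restricts to a bijection from $[n-1]\times\cdots\times[1]$ (sequences with $j_k\le k-1$) onto $\mathcal C_n$. *)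

theory Defs
  imports "HOL-Combinatorics.Combinatorics"
begin

text \<open>The paper uses
 right actions with products composed left to right, i(\<sigma>\<rho>) = (i\<sigma>)\<rho>; hence the
 paper's product \<sigma>\<rho> is the function \<rho> \<circ> \<sigma>.\<close>

fun Phi :: "nat \<Rightarrow> (nat \<Rightarrow> nat) \<Rightarrow> nat \<Rightarrow> nat" where
  "Phi 0 s = id"
| "Phi (Suc 0) s = id"
| "Phi (Suc (Suc m)) s = Transposition.transpose (s (Suc (Suc m))) (Suc (Suc m)) \<circ> Phi (Suc m) s"

definition is_kcycle :: "nat \<Rightarrow> nat \<Rightarrow> (nat \<Rightarrow> nat) \<Rightarrow> bool" where
  "is_kcycle n k \<sigma> \<longleftrightarrow> (\<exists>xs. length xs = k \<and> distinct xs \<and> set xs \<subseteq> {1..n} \<and> \<sigma> = cycle_of_list xs)"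

definition ncycles :: "nat \<Rightarrow> (nat \<Rightarrow> nat) set" where
  "ncycles n = {\<sigma>. \<sigma> permutes {1..n} \<and> is_kcycle n n \<sigma>}"

definition Seqs :: "nat \<Rightarrow> (nat \<Rightarrow> nat) set" where
  "Seqs n = {s. (\<forall>k\<in>{2..n}. 1 \<le> s k \<and> s k \<le> k) \<and> (\<forall>k. k \<notin> {2..n} \<longrightarrow> s k = 0)}"

definition CycSeqs :: "nat \<Rightarrow> (nat \<Rightarrow> nat) set" where
  "CycSeqs n = {s. (\<forall>k\<in>{2..n}. 1 \<le> s k \<and> s k \<le> k - 1) \<and> (\<forall>k. k \<notin> {2..n} \<longrightarrow> s k = 0)}"

definition differ_one :: "nat \<Rightarrow> (nat \<Rightarrow> nat) \<Rightarrow> (nat \<Rightarrow> nat) \<Rightarrow> bool" where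
  "differ_one n s s' \<longleftrightarrow> card {k\<in>{2..n}. s k \<noteq> s' k} = 1"

end

theory Submission
  imports Defs
begin

(* If s' differs from s only in coordinate k, then Phi n s' = \<sigma> \<circ> Phi n s, where \<sigma> is the
   conjugate of tau(s' k, k) \<circ> tau(s k, k) by the product of the transpositions at the
   positions k+1..n.  Two transpositions sharing the point k compose to a 3-cycle unless one
   of them is trivial, i.e. unless s k = k or s' k = k, which is excluded when all
   j_k \<le> k - 1.
   Composing tau(j, n+1) with an n-cycle through j inserts n+1 into that cycle just before j,
   so by induction on n the map Phi sends the sequences with j_k \<le> k - 1 onto the n-cycles.
   It is injective because Phi n s sends n to s n, which lets one peel off the last
   transposition. *)

abbreviation \<tau> :: "'a \<Rightarrow> 'a \<Rightarrow> 'a \<Rightarrow> 'a" where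
  "\<tau> \<equiv> Transposition.transpose"

lemma Phi_Suc: "1 \<le> n \<Longrightarrow> Phi (Suc n) s = \<tau> (s (Suc n)) (Suc n) \<circ> Phi n s"
  by (cases n) auto

lemma Phi_cong: "\<forall>k\<in>{2..n}. s k = s' k \<Longrightarrow> Phi n s = Phi n s'"
  by (induction n s rule: Phi.induct) (auto simp: fun_eq_iff)

lemma Phi_permutes: "\<forall>k\<in>{2..n}. 1 \<le> s k \<and> s k \<le> k \<Longrightarrow> Phi n s permutes {1..n}"
proof (induction n s rule: Phi.induct)
  case (3 m s)
  have "Phi (Suc m) s permutes {1..Suc (Suc m)}"
    using 3 by (intro permutes_subset[OF 3(1)]) auto
  moreover have "\<tau> (s (Suc (Suc m))) (Suc (Suc m)) permutes {1..Suc (Suc m)}"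
    using 3(2) by (intro permutes_swap_id) auto
  ultimately show ?case
    by (simp only: Phi.simps permutes_compose)
qed simp_all

lemma Phi_apply_top:
  assumes "1 \<le> n" "\<forall>k\<in>{2..Suc n}. 1 \<le> s k \<and> s k \<le> k"
  shows "Phi (Suc n) s (Suc n) = s (Suc n)"
proof -
  have "Phi n s permutes {1..n}"
    using assms(2) by (intro Phi_permutes) auto
  then have "Phi n s (Suc n) = Suc n"
    by (simp add: permutes_not_in)
  then show ?thesis
    using assms(1) by (simp add: Phi_Suc)
qed

lemma Phi_eq_imp_agree:
  assumes "\<forall>k\<in>{2..n}. 1 \<le> s k \<and> s k \<le> k" "\<forall>k\<in>{2..n}. 1 \<le> s' k \<and> s' k \<le> k"
    and "Phi n s = Phi n s'"
  shows "\<forall>k\<in>{2..n}. s k = s' k"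
  using assms
proof (induction n)
  case (Suc n)
  show ?case
  proof (cases "n = 0")
    case False
    then have n: "1 \<le> n" by simp
    have top: "s (Suc n) = s' (Suc n)"
      using Phi_apply_top[OF n Suc.prems(1)] Phi_apply_top[OF n Suc.prems(2)] Suc.prems(3)
      by simp
    let ?t = "\<tau> (s (Suc n)) (Suc n)"
    have "Phi n s = ?t \<circ> Phi (Suc n) s"
      using n by (simp add: Phi_Suc flip: comp_assoc)
    also have "\<dots> = ?t \<circ> Phi (Suc n) s'"
      using Suc.prems(3) by simp
    also have "\<dots> = Phi n s'"
      using n top by (simp add: Phi_Suc flip: comp_assoc)
    finally have "\<forall>k\<in>{2..n}. s k = s' k"
      using Suc.IH Suc.prems(1,2) by simp
    with top show ?thesis
      by (auto simp: le_Suc_eq)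
  qed simp
qed simp

lemma Seqs_bounds: "s \<in> Seqs n \<Longrightarrow> \<forall>k\<in>{2..n}. 1 \<le> s k \<and> s k \<le> k"
  unfolding Seqs_def by auto

lemma inj_on_Phi_Seqs: "inj_on (Phi n) (Seqs n)"
proof
  fix s s' assume s: "s \<in> Seqs n" and s': "s' \<in> Seqs n" and "Phi n s = Phi n s'"
  then have "\<forall>k\<in>{2..n}. s k = s' k"
    by (intro Phi_eq_imp_agree Seqs_bounds)
  moreover have "\<forall>k. k \<notin> {2..n} \<longrightarrow> s k = 0 \<and> s' k = 0"
    using s s' unfolding Seqs_def by blast
  ultimately show "s = s'"
    by (metis ext)
qed

lemma Phi_fun_upd_conj:
  assumes "2 \<le> k" "k \<le> n" "\<forall>m\<in>{2..n}. 1 \<le> s m \<and> s m \<le> m"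
  shows "\<exists>A. A permutes {1..n} \<and>
           Phi n (s(k := j)) = A \<circ> \<tau> j k \<circ> \<tau> (s k) k \<circ> inv A \<circ> Phi n s"
  using assms
proof (induction n)
  case (Suc n)
  have n: "1 \<le> n" using Suc.prems by simp
  show ?case
  proof (cases "k = Suc n")
    case True
    have "Phi n (s(k := j)) = Phi n s"
      using True by (intro Phi_cong) auto
    then have "Phi (Suc n) (s(k := j)) = \<tau> j k \<circ> \<tau> (s k) k \<circ> Phi (Suc n) s"
      using True n by (simp add: Phi_Suc fun_eq_iff)
    then show ?thesis
      by (intro exI[of _ id] conjI permutes_id) (simp only: inv_id id_comp comp_id)
  next
    case False
    then have "k \<le> n" "\<forall>m\<in>{2..n}. 1 \<le> s m \<and> s m \<le> m"
      using Suc.prems(2,3) by auto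
    then obtain A where A: "A permutes {1..n}"
      "Phi n (s(k := j)) = A \<circ> \<tau> j k \<circ> \<tau> (s k) k \<circ> inv A \<circ> Phi n s"
      using Suc.IH Suc.prems(1) by blast
    let ?t = "\<tau> (s (Suc n)) (Suc n)"
    have inv_tA: "inv (?t \<circ> A) = inv A \<circ> ?t"
      using o_inv_distrib[OF bij_transpose permutes_bij[OF A(1)]] by simp
    have "?t permutes {1..Suc n}"
      using Suc.prems(3) n by (intro permutes_swap_id) auto
    moreover have "A permutes {1..Suc n}"
      using A(1) by (rule permutes_subset) auto
    moreover have "Phi (Suc n) (s(k := j))
        = (?t \<circ> A) \<circ> \<tau> j k \<circ> \<tau> (s k) k \<circ> inv (?t \<circ> A) \<circ> Phi (Suc n) s"
      using A(2) False n inv_tA by (simp add: Phi_Suc fun_eq_iff)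
    ultimately show ?thesis
      using permutes_compose by blast
  qed
qed simp

lemma transpose_comp_transpose_eq_cycle:
  "\<tau> a k \<circ> \<tau> b k = cycle_of_list (if a = k then [b, k] else if b = k then [a, k] else [a, k, b])"
  by (simp add: transpose_commute)

lemma is_kcycle_conj:
  assumes "A permutes {1..n}" "distinct xs" "set xs \<subseteq> {1..n}"
  shows "is_kcycle n (length xs) (A \<circ> cycle_of_list xs \<circ> inv A)"
proof -
  have "A \<circ> cycle_of_list xs \<circ> inv A = cycle_of_list (map A xs)"
    using assms(2) permutes_bij[OF assms(1)] by (rule conjugation_of_cycle)
  moreover have "distinct (map A xs)"
    using assms(2) permutes_inj[OF assms(1)] by (simp add: distinct_map inj_on_def)
  moreover have "set (map A xs) \<subseteq> {1..n}"
    using assms(3) permutes_in_image[OF assms(1)] by auto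
  ultimately show ?thesis
    unfolding is_kcycle_def by (intro exI[of _ "map A xs"]) auto
qed

lemma is_kcycle_permutes: "is_kcycle n k \<sigma> \<Longrightarrow> \<sigma> permutes {1..n}"
  unfolding is_kcycle_def using cycle_permutes permutes_subset by blast

lemma Phi_fun_upd_is_kcycle:
  assumes "2 \<le> k" "k \<le> n" "\<forall>m\<in>{2..n}. 1 \<le> s m \<and> s m \<le> m" "j \<in> {1..k}" "j \<noteq> s k"
  shows "\<exists>\<sigma>. Phi n (s(k := j)) = \<sigma> \<circ> Phi n s \<and>
              is_kcycle n (if j = k \<or> s k = k then 2 else 3) \<sigma>"
proof -
  obtain A where A: "A permutes {1..n}"
    "Phi n (s(k := j)) = A \<circ> \<tau> j k \<circ> \<tau> (s k) k \<circ> inv A \<circ> Phi n s"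
    using Phi_fun_upd_conj[OF assms(1-3)] by blast
  have "s k \<in> {1..k}"
    using assms(1-3) by auto
  define xs where "xs = (if j = k then [s k, k] else if s k = k then [j, k] else [j, k, s k])"
  have "Phi n (s(k := j)) = (A \<circ> cycle_of_list xs \<circ> inv A) \<circ> Phi n s"
    using A(2) unfolding xs_def by (simp add: transpose_comp_transpose_eq_cycle comp_assoc)
  moreover have "is_kcycle n (length xs) (A \<circ> cycle_of_list xs \<circ> inv A)"
    using \<open>s k \<in> {1..k}\<close> assms(1,2,4,5) unfolding xs_def
    by (intro is_kcycle_conj[OF A(1)]) auto
  moreover have "length xs = (if j = k \<or> s k = k then 2 else 3)"
    unfolding xs_def by simp
  ultimately show ?thesis
    by auto
qed

lemma differ_oneE:
  assumes "differ_one n s s'"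
  obtains k where "k \<in> {2..n}" "s k \<noteq> s' k" "\<forall>m\<in>{2..n}. m \<noteq> k \<longrightarrow> s m = s' m"
proof -
  obtain k where "{m \<in> {2..n}. s m \<noteq> s' m} = {k}"
    using assms unfolding differ_one_def by (auto simp: card_1_singleton_iff)
  then show thesis
    using that by blast
qed

lemma Phi_differ_one:
  assumes "s \<in> Seqs n" "s' \<in> Seqs n" "differ_one n s s'"
  obtains k \<sigma> where "k \<in> {2..n}" "Phi n s' = \<sigma> \<circ> Phi n s"
    "is_kcycle n (if s k = k \<or> s' k = k then 2 else 3) \<sigma>"
proof -
  obtain k where k: "k \<in> {2..n}" "s k \<noteq> s' k" "\<forall>m\<in>{2..n}. m \<noteq> k \<longrightarrow> s m = s' m"
    using assms(3) by (rule differ_oneE)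
  have "Phi n s' = Phi n (s(k := s' k))"
    using k(3) by (intro Phi_cong) auto
  moreover have "s' k \<in> {1..k}"
    using Seqs_bounds[OF assms(2)] k(1) by auto
  ultimately show thesis
    using Phi_fun_upd_is_kcycle[of k n s "s' k"] k(1,2) Seqs_bounds[OF assms(1)] that
    by (auto simp: disj_commute)
qed

lemma Phi_differ_one_Seqs:
  assumes "s \<in> Seqs n" "s' \<in> Seqs n" "differ_one n s s'"
  shows "\<exists>\<sigma>. \<sigma> permutes {1..n} \<and> Phi n s' = \<sigma> \<circ> Phi n s \<and>
              (is_kcycle n 2 \<sigma> \<or> is_kcycle n 3 \<sigma>)"
proof -
  obtain k \<sigma> where "Phi n s' = \<sigma> \<circ> Phi n s"
    "is_kcycle n (if s k = k \<or> s' k = k then 2 else 3) \<sigma>"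
    using Phi_differ_one[OF assms] .
  then show ?thesis
    using is_kcycle_permutes by (cases "s k = k \<or> s' k = k") auto
qed

lemma CycSeqs_subset_Seqs: "CycSeqs n \<subseteq> Seqs n"
  unfolding CycSeqs_def Seqs_def by auto

lemma Phi_differ_one_CycSeqs:
  assumes "s \<in> CycSeqs n" "s' \<in> CycSeqs n" "differ_one n s s'"
  shows "\<exists>\<sigma>. \<sigma> permutes {1..n} \<and> Phi n s' = \<sigma> \<circ> Phi n s \<and> is_kcycle n 3 \<sigma>"
proof -
  obtain k \<sigma> where k: "k \<in> {2..n}" "Phi n s' = \<sigma> \<circ> Phi n s"
    "is_kcycle n (if s k = k \<or> s' k = k then 2 else 3) \<sigma>"
    using Phi_differ_one assms CycSeqs_subset_Seqs by blast
  moreover have "s k \<noteq> k" "s' k \<noteq> k"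
    using assms(1,2) k(1) unfolding CycSeqs_def by fastforce+
  ultimately show ?thesis
    using is_kcycle_permutes by auto
qed

lemma ncycles_iff: "c \<in> ncycles n \<longleftrightarrow> (\<exists>xs. distinct xs \<and> set xs = {1..n} \<and> c = cycle_of_list xs)"
proof
  assume "c \<in> ncycles n"
  then obtain xs where xs: "length xs = n" "distinct xs" "set xs \<subseteq> {1..n}" "c = cycle_of_list xs"
    unfolding ncycles_def is_kcycle_def by auto
  then have "set xs = {1..n}"
    by (intro card_subset_eq) (auto simp: distinct_card)
  with xs show "\<exists>xs. distinct xs \<and> set xs = {1..n} \<and> c = cycle_of_list xs"
    by blast
next
  assume "\<exists>xs. distinct xs \<and> set xs = {1..n} \<and> c = cycle_of_list xs"
  then obtain xs where xs: "distinct xs" "set xs = {1..n}" "c = cycle_of_list xs"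
    by blast
  moreover have "length xs = n"
    using xs(1,2) distinct_card by fastforce
  ultimately show "c \<in> ncycles n"
    unfolding ncycles_def is_kcycle_def using cycle_permutes[of xs] by auto
qed

lemma cycle_of_list_start_at:
  assumes "distinct xs" "x \<in> set xs"
  obtains ys where "distinct (x # ys)" "set (x # ys) = set xs"
    "cycle_of_list (x # ys) = cycle_of_list xs"
proof -
  obtain as bs where xs: "xs = as @ x # bs"
    using split_list[OF assms(2)] by blast
  then have "rotate (length as) xs = x # bs @ as"
    by (simp add: rotate_append)
  then have "cycle_of_list (x # bs @ as) = cycle_of_list xs"
    using cycle_of_list_rotate_independent[OF assms(1)] by metis
  then show thesis
    using that[of "bs @ as"] assms(1) xs by auto
qed

lemma ncycles_Suc:
  assumes "1 \<le> n"
  shows "ncycles (Suc n) = (\<lambda>(j, c). \<tau> j (Suc n) \<circ> c) ` ({1..n} \<times> ncycles n)"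
proof (intro equalityI subsetI)
  fix d assume "d \<in> ncycles (Suc n)"
  then obtain xs where xs: "distinct xs" "set xs = {1..Suc n}" "d = cycle_of_list xs"
    by (auto simp: ncycles_iff)
  then have "Suc n \<in> set xs"
    by simp
  then obtain ys where ys: "distinct (Suc n # ys)" "set (Suc n # ys) = set xs"
    "cycle_of_list (Suc n # ys) = cycle_of_list xs"
    by (rule cycle_of_list_start_at[OF xs(1)])
  have "set ys = set (Suc n # ys) - {Suc n}"
    using ys(1) by auto
  also have "\<dots> = {1..n}"
    using ys(2) xs(2) by fastforce
  finally have set_ys: "set ys = {1..n}" .
  with assms obtain j zs where ys_eq: "ys = j # zs"
    by (cases ys) auto
  have "d = \<tau> j (Suc n) \<circ> cycle_of_list ys"
    using xs(3) ys(3) ys_eq by (simp add: transpose_commute)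
  moreover have "cycle_of_list ys \<in> ncycles n"
    unfolding ncycles_iff using ys(1) set_ys by auto
  moreover have "j \<in> {1..n}"
    using set_ys ys_eq by auto
  ultimately show "d \<in> (\<lambda>(j, c). \<tau> j (Suc n) \<circ> c) ` ({1..n} \<times> ncycles n)"
    by force
next
  fix d assume "d \<in> (\<lambda>(j, c). \<tau> j (Suc n) \<circ> c) ` ({1..n} \<times> ncycles n)"
  then obtain j xs where j: "j \<in> {1..n}" and xs: "distinct xs" "set xs = {1..n}"
    and d: "d = \<tau> j (Suc n) \<circ> cycle_of_list xs"
    by (auto simp: ncycles_iff)
  then have "j \<in> set xs"
    by simp
  then obtain ys where ys: "distinct (j # ys)" "set (j # ys) = set xs"
    "cycle_of_list (j # ys) = cycle_of_list xs"
    by (rule cycle_of_list_start_at[OF xs(1)])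
  then have "d = cycle_of_list (Suc n # j # ys)"
    using d by (simp add: transpose_commute)
  moreover have "distinct (Suc n # j # ys)" "set (Suc n # j # ys) = {1..Suc n}"
    using ys(1,2) xs(2) by auto
  ultimately show "d \<in> ncycles (Suc n)"
    unfolding ncycles_iff by blast
qed

lemma CycSeqs_Suc:
  assumes "1 \<le> n"
  shows "CycSeqs (Suc n) = (\<lambda>(j, s). s(Suc n := j)) ` ({1..n} \<times> CycSeqs n)"
proof (intro equalityI subsetI)
  fix s assume s: "s \<in> CycSeqs (Suc n)"
  have "\<forall>k\<in>{2..Suc n}. 1 \<le> s k \<and> s k \<le> k - 1"
    using s unfolding CycSeqs_def by blast
  then have "1 \<le> s (Suc n) \<and> s (Suc n) \<le> Suc n - 1"
    by (rule bspec) (use assms in simp)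
  then have "s (Suc n) \<in> {1..n}"
    by simp
  moreover have "s(Suc n := 0) \<in> CycSeqs n"
    using s unfolding CycSeqs_def by auto
  ultimately show "s \<in> (\<lambda>(j, s). s(Suc n := j)) ` ({1..n} \<times> CycSeqs n)"
    by (intro image_eqI[of _ _ "(s (Suc n), s(Suc n := 0))"]) auto
qed (use assms in \<open>auto simp: CycSeqs_def\<close>)

lemma Phi_image_CycSeqs: "1 \<le> n \<Longrightarrow> Phi n ` CycSeqs n = ncycles n"
proof (induction n rule: nat_induct_at_least)
  case base
  have "CycSeqs 1 = {\<lambda>_. 0}"
    unfolding CycSeqs_def by auto
  moreover have "ncycles 1 = {id}"
  proof
    show "ncycles 1 \<subseteq> {id}"
      unfolding ncycles_def by auto
    have "id \<in> ncycles 1"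
      unfolding ncycles_iff by (intro exI[of _ "[1]"]) simp
    then show "{id} \<subseteq> ncycles 1"
      by simp
  qed
  ultimately show ?case
    by (simp add: id_def)
next
  case (Suc n)
  have "Phi (Suc n) (s(Suc n := j)) = \<tau> j (Suc n) \<circ> Phi n s" for s j
    using Suc.hyps Phi_cong[of n "s(Suc n := j)" s] by (simp add: Phi_Suc)
  then have "Phi (Suc n) ` CycSeqs (Suc n)
      = (\<lambda>(j, s). \<tau> j (Suc n) \<circ> Phi n s) ` ({1..n} \<times> CycSeqs n)"
    unfolding CycSeqs_Suc[OF Suc.hyps] image_image by (simp add: case_prod_beta)
  also have "\<dots> = (\<lambda>(j, c). \<tau> j (Suc n) \<circ> c) ` ({1..n} \<times> Phi n ` CycSeqs n)"
    by force
  finally show ?case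
    using Suc.IH ncycles_Suc[OF Suc.hyps] by simp
qed

lemma map_Phi_Gray_code:
  assumes "1 \<le> n" "distinct L" "set L = CycSeqs n"
    and "\<forall>i. Suc i < length L \<longrightarrow> differ_one n (L ! i) (L ! Suc i)"
  shows "distinct (map (Phi n) L) \<and> set (map (Phi n) L) = ncycles n \<and>
    (\<forall>i. Suc i < length L \<longrightarrow>
       (\<exists>\<sigma>. \<sigma> permutes {1..n} \<and> is_kcycle n 3 \<sigma> \<and> Phi n (L ! Suc i) = \<sigma> \<circ> Phi n (L ! i)))"
proof (intro conjI allI impI)
  have "inj_on (Phi n) (set L)"
    using inj_on_Phi_Seqs CycSeqs_subset_Seqs assms(3) by (metis inj_on_subset)
  then show "distinct (map (Phi n) L)"
    using assms(2) by (simp add: distinct_map)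
  show "set (map (Phi n) L) = ncycles n"
    using assms(1,3) Phi_image_CycSeqs by simp
  fix i assume "Suc i < length L"
  then show "\<exists>\<sigma>. \<sigma> permutes {1..n} \<and> is_kcycle n 3 \<sigma> \<and> Phi n (L ! Suc i) = \<sigma> \<circ> Phi n (L ! i)"
    using Phi_differ_one_CycSeqs[of "L ! i" n "L ! Suc i"] assms(3,4) nth_mem by fastforce
qed

theorem mainTheorem5:
  fixes n :: nat
  assumes "n \<ge> 2"
  shows
   "(\<forall>s\<in>Seqs n. \<forall>s'\<in>Seqs n. differ_one n s s' \<longrightarrow>
       (\<exists>\<sigma>. \<sigma> permutes {1..n} \<and> Phi n s' = \<sigma> \<circ> Phi n s \<and>
            (is_kcycle n 2 \<sigma> \<or> is_kcycle n 3 \<sigma>)))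
  \<and> (\<forall>s\<in>CycSeqs n. \<forall>s'\<in>CycSeqs n. differ_one n s s' \<longrightarrow>
       (\<exists>\<sigma>. \<sigma> permutes {1..n} \<and> Phi n s' = \<sigma> \<circ> Phi n s \<and> is_kcycle n 3 \<sigma>))
  \<and> (\<forall>L. distinct L \<and> set L = CycSeqs n \<and>
         (\<forall>i. Suc i < length L \<longrightarrow> differ_one n (L ! i) (L ! Suc i)) \<longrightarrow>
       distinct (map (Phi n) L) \<and> set (map (Phi n) L) = ncycles n \<and>
       (\<forall>i. Suc i < length L \<longrightarrow>
          (\<exists>\<sigma>. \<sigma> permutes {1..n} \<and> is_kcycle n 3 \<sigma> \<and>
               Phi n (L ! Suc i) = \<sigma> \<circ> Phi n (L ! i))))"
proof -
  have "1 \<le> n"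
    using assms by simp
  then show ?thesis
    using Phi_differ_one_Seqs Phi_differ_one_CycSeqs map_Phi_Gray_code[of n] by blast
qed

end
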